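(* For any frame $L$, the map $f\mapsto \beta\circ f$, where $\beta\colon\mathrm{coS}(L)\to\mathfrak{B}(\mathrm{coS}(L))$, $S\mapsto S^{\ast\ast}$, restricts to an order isomorphism $\mathrm{F}(L)\to\mathrm{C}(\mathfrak{B}(\mathrm{coS}(L)))$.
   Context: $\mathbb{Q}$ is the rationals. A sublocale of $L$ is a subset closed under arbitrary meets and such that $x\to s\in S$ for $x\in L$, $s\in S$; $\mathrm{coS}(L)$ is the frame of sublocales ordered by reverse inclusion, with pseudocomplement $^\ast$. For a frame $M$, $\mathfrak{B}(M)=\{x\mid x=x^{\ast\ast}\}$ is its Booleanization (a complete Boolean algebra) and $x\mapsto x^{\ast\ast}$ is a frame homomorphism $M\to\mathfrak{B}(M)$. The frame $\mathfrak{L}(\overline{\mathbb{IR}})$ is presented by generators $(r,\textsf{---})$, $(\textsf{---},s)$ ($r,s\in\mathbb{Q}$) with relations (r1) $(r,\textsf{---})\wedge(\textsf{---},s)=0$ for $r\ge s$; (r3) $(r,\textsf{---})=\bigvee_{s>r}(s,\textsf{---})$; (r4) $(\textsf{---},s)=\bigvee_{r<s}(\textsf{---},r)$. For a frame $M$, homomorphisms $\mathfrak{L}(\overline{\mathbb{IR}})\to M$ are ordered by $f\le g$ iff $f(r,\textsf{---})\le g(r,\textsf{---})$ and $g(\textsf{---},s)\le f(\textsf{---},s)$; $\mathrm{C}(M)$ (continuous real functions) is the set of those $f$ with (r2) $f(r,\textsf{---})\vee f(\textsf{---},s)=1$ for $r<s$, (r5) $\bigvee_r f(r,\textsf{---})=1$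 and (r6) $\bigvee_s f(\textsf{---},s)=1$. $\overline{\mathrm{F}}(L)$ is the set of homomorphisms $f\colon\mathfrak{L}(\overline{\mathbb{IR}})\to\mathrm{coS}(L)$ with $f(r,\textsf{---})^\ast\le f(\textsf{---},s)$ and $f(\textsf{---},s)^\ast\le f(r,\textsf{---})$ for $r<s$; it is a complete lattice with top $\boldsymbol{+\infty}$ ($(r,\textsf{---})\mapsto1$, $(\textsf{---},s)\mapsto0$) and bottom $\boldsymbol{-\infty}$ ($(r,\textsf{---})\mapsto0$, $(\textsf{---},s)\mapsto1$). $\mathrm{F}(L)$ is the set of $f\in\overline{\mathrm{F}}(L)$ such that for all $g\in\overline{\mathrm{F}}(L)$, $f\vee g=\boldsymbol{+\infty}\Rightarrow g=\boldsymbol{+\infty}$ and $f\wedge g=\boldsymbol{-\infty}\Rightarrow g=\boldsymbol{-\infty}$. *)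

theory Defs
  imports Complex_Main
begin

definition is_lub :: "'b set \<Rightarrow> ('b \<Rightarrow> 'b \<Rightarrow> bool) \<Rightarrow> 'b set \<Rightarrow> 'b \<Rightarrow> bool" where
  "is_lub A le X u \<longleftrightarrow> u \<in> A \<and> (\<forall>x\<in>X. le x u) \<and> (\<forall>v\<in>A. (\<forall>x\<in>X. le x v) \<longrightarrow> le u v)"

definition is_glb :: "'b set \<Rightarrow> ('b \<Rightarrow> 'b \<Rightarrow> bool) \<Rightarrow> 'b set \<Rightarrow> 'b \<Rightarrow> bool" where
  "is_glb A le X u \<longleftrightarrow> u \<in> A \<and> (\<forall>x\<in>X. le u x) \<and> (\<forall>v\<in>A. (\<forall>x\<in>X. le v x) \<longrightarrow> le v u)"

definition lub :: "'b set \<Rightarrow> ('b \<Rightarrow> 'b \<Rightarrow> bool) \<Rightarrow> 'b set \<Rightarrow> 'b" where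
  "lub A le X = (THE u. is_lub A le X u)"

definition glb :: "'b set \<Rightarrow> ('b \<Rightarrow> 'b \<Rightarrow> bool) \<Rightarrow> 'b set \<Rightarrow> 'b" where
  "glb A le X = (THE u. is_glb A le X u)"

definition top_el :: "'b set \<Rightarrow> ('b \<Rightarrow> 'b \<Rightarrow> bool) \<Rightarrow> 'b" where
  "top_el A le = glb A le {}"

definition bot_el :: "'b set \<Rightarrow> ('b \<Rightarrow> 'b \<Rightarrow> bool) \<Rightarrow> 'b" where
  "bot_el A le = lub A le {}"

definition meet :: "'b set \<Rightarrow> ('b \<Rightarrow> 'b \<Rightarrow> bool) \<Rightarrow> 'b \<Rightarrow> 'b \<Rightarrow> 'b" where
  "meet A le x y = glb A le {x, y}"

definition join :: "'b set \<Rightarrow> ('b \<Rightarrow> 'b \<Rightarrow> bool) \<Rightarrow> 'b \<Rightarrow> 'b \<Rightarrow> 'b" where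
  "join A le x y = lub A le {x, y}"

definition pcompl :: "'b set \<Rightarrow> ('b \<Rightarrow> 'b \<Rightarrow> bool) \<Rightarrow> 'b \<Rightarrow> 'b" where
  "pcompl A le x = lub A le {y \<in> A. meet A le x y = bot_el A le}"

definition booleanization :: "'b set \<Rightarrow> ('b \<Rightarrow> 'b \<Rightarrow> bool) \<Rightarrow> 'b set" where
  "booleanization A le = {x \<in> A. pcompl A le (pcompl A le x) = x}"

text \<open>A homomorphism f from L(IR-bar) into a frame M is given by its values on the generators:
  u r = f(r,---) and d s = f(---,s), subject to relations (r1), (r3), (r4) holding in M.\<close>
definition LIR_hom :: "'b set \<Rightarrow> ('b \<Rightarrow> 'b \<Rightarrow> bool) \<Rightarrow> (rat \<Rightarrow> 'b) \<times> (rat \<Rightarrow> 'b) \<Rightarrow> bool" where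
  "LIR_hom A le f \<longleftrightarrow>
     (\<forall>r. fst f r \<in> A) \<and> (\<forall>s. snd f s \<in> A) \<and>
     (\<forall>r s. r \<ge> s \<longrightarrow> meet A le (fst f r) (snd f s) = bot_el A le) \<and>
     (\<forall>r. fst f r = lub A le {fst f s | s. s > r}) \<and>
     (\<forall>s. snd f s = lub A le {snd f r | r. r < s})"

definition hom_le :: "('b \<Rightarrow> 'b \<Rightarrow> bool) \<Rightarrow> (rat \<Rightarrow> 'b) \<times> (rat \<Rightarrow> 'b) \<Rightarrow> (rat \<Rightarrow> 'b) \<times> (rat \<Rightarrow> 'b) \<Rightarrow> bool" where
  "hom_le le f g \<longleftrightarrow> (\<forall>r. le (fst f r) (fst g r)) \<and> (\<forall>s. le (snd g s) (snd f s))"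

definition C_frame :: "'b set \<Rightarrow> ('b \<Rightarrow> 'b \<Rightarrow> bool) \<Rightarrow> ((rat \<Rightarrow> 'b) \<times> (rat \<Rightarrow> 'b)) set" where
  "C_frame A le = {f. LIR_hom A le f \<and>
     (\<forall>r s. r < s \<longrightarrow> join A le (fst f r) (snd f s) = top_el A le) \<and>
     lub A le (range (fst f)) = top_el A le \<and>
     lub A le (range (snd f)) = top_el A le}"

definition is_frame :: "'a::complete_lattice itself \<Rightarrow> bool" where
  "is_frame _ \<longleftrightarrow> (\<forall>(a::'a) B. inf a (Sup B) = Sup ((inf a) ` B))"

definition frame_imp :: "'a::complete_lattice \<Rightarrow> 'a \<Rightarrow> 'a" where
  "frame_imp x s = Sup {y. inf y x \<le> s}"

definition is_sublocale :: "'a::complete_lattice set \<Rightarrow> bool" where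
  "is_sublocale S \<longleftrightarrow> (\<forall>T. T \<subseteq> S \<longrightarrow> Inf T \<in> S) \<and> (\<forall>x. \<forall>s\<in>S. frame_imp x s \<in> S)"

definition coS :: "'a::complete_lattice set set" where
  "coS = {S. is_sublocale S}"

definition coS_le :: "'a set \<Rightarrow> 'a set \<Rightarrow> bool" where
  "coS_le S T \<longleftrightarrow> T \<subseteq> S"

definition Fbar :: "((rat \<Rightarrow> 'a::complete_lattice set) \<times> (rat \<Rightarrow> 'a set)) set" where
  "Fbar = {f. LIR_hom coS coS_le f \<and>
     (\<forall>r s. r < s \<longrightarrow> coS_le (pcompl coS coS_le (fst f r)) (snd f s)
                    \<and> coS_le (pcompl coS coS_le (snd f s)) (fst f r))}"

definition PInf :: "(rat \<Rightarrow> 'a::complete_lattice set) \<times> (rat \<Rightarrow> 'a set)" where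
  "PInf = (\<lambda>_. top_el coS coS_le, \<lambda>_. bot_el coS coS_le)"

definition MInf :: "(rat \<Rightarrow> 'a::complete_lattice set) \<times> (rat \<Rightarrow> 'a set)" where
  "MInf = (\<lambda>_. bot_el coS coS_le, \<lambda>_. top_el coS coS_le)"

definition FL :: "((rat \<Rightarrow> 'a::complete_lattice set) \<times> (rat \<Rightarrow> 'a set)) set" where
  "FL = {f \<in> Fbar. \<forall>g \<in> Fbar.
      (lub Fbar (hom_le coS_le) {f, g} = PInf \<longrightarrow> g = PInf) \<and>
      (glb Fbar (hom_le coS_le) {f, g} = MInf \<longrightarrow> g = MInf)}"

definition beta :: "'a::complete_lattice set \<Rightarrow> 'a set" where
  "beta S = pcompl coS coS_le (pcompl coS coS_le S)"

definition beta_comp :: "(rat \<Rightarrow> 'a::complete_lattice set) \<times> (rat \<Rightarrow> 'a set)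
    \<Rightarrow> (rat \<Rightarrow> 'a set) \<times> (rat \<Rightarrow> 'a set)" where
  "beta_comp f = (\<lambda>r. beta (fst f r), \<lambda>s. beta (snd f s))"

end

theory Submission
  imports Defs
begin

text \<open>
  Write f = (u, d) with u r = f(r,---) and d s = f(---,s), and let M be any frame. For f in
  F-bar(M), relation (r1) together with (u r)* \<le> d s and (d s)* \<le> u r for r < s forces
  u r = Sup {(d s)* | s > r} and d s = Sup {(u r)* | r < s}. Since x* = (x**)*, these formulas
  recover f from \<beta> \<circ> f, and they also invert \<beta> on C-bar(B(M)), so composition with \<beta>
  is an order isomorphism from F-bar(M) onto C-bar(B(M)). Binary joins in F-bar(M) are
  therefore obtained by applying \<beta> and its inverse to pointwise joins, and binary meets follow
  by the symmetry f \<mapsto> -f. With these, the two cancellation properties defining F(M) become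
  (Sup_r u r)** = 1 and (Sup_s d s)** = 1, that is (r5) and (r6) for \<beta> \<circ> f. Finally coS(L)
  is itself a frame, the meet of two sublocales S, T being {a \<and> b | a \<in> S, b \<in> T}, so all of
  this applies to M = coS(L).
\<close>

section \<open>Least upper bounds relative to a carrier\<close>

lemma lub_eqI:
  assumes "\<And>x y. x \<in> A \<Longrightarrow> y \<in> A \<Longrightarrow> le x y \<Longrightarrow> le y x \<Longrightarrow> x = y"
    and "is_lub A le X u"
  shows "lub A le X = u"
  unfolding lub_def
proof (rule the_equality)
  show "is_lub A le X u" by fact
  show "v = u" if "is_lub A le X v" for v
    using assms that unfolding is_lub_def by metis
qed

lemma is_glb_iff_is_lub_dual: "is_glb A le X u \<longleftrightarrow> is_lub A (\<lambda>x y. le y x) X u"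
  unfolding is_glb_def is_lub_def ..

lemma glb_eq_lub_dual: "glb A le X = lub A (\<lambda>x y. le y x) X"
  unfolding glb_def lub_def is_glb_iff_is_lub_dual ..

lemma glb_eqI:
  assumes "\<And>x y. x \<in> A \<Longrightarrow> y \<in> A \<Longrightarrow> le x y \<Longrightarrow> le y x \<Longrightarrow> x = y"
    and "is_glb A le X u"
  shows "glb A le X = u"
  using assms unfolding glb_eq_lub_dual is_glb_iff_is_lub_dual by (blast intro: lub_eqI)

lemma is_lub_image:
  assumes "\<And>x y. x \<in> P \<Longrightarrow> y \<in> P \<Longrightarrow> le' (H x) (H y) \<longleftrightarrow> le x y"
    and "X \<subseteq> P" and "is_lub P le X u"
  shows "is_lub (H ` P) le' (H ` X) (H u)"
proof -
  have u: "u \<in> P" "\<And>x. x \<in> X \<Longrightarrow> le x u" "\<And>v. v \<in> P \<Longrightarrow> \<forall>x\<in>X. le x v \<Longrightarrow> le u v"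
    using assms(3) unfolding is_lub_def by blast+
  show ?thesis
    unfolding is_lub_def
  proof (intro conjI ballI impI)
    show "H u \<in> H ` P" using u(1) by blast
    show "le' y (H u)" if "y \<in> H ` X" for y
      using that u(1,2) assms(1,2) by blast
    show "le' (H u) v'" if "v' \<in> H ` P" and "\<forall>y\<in>H ` X. le' y v'" for v'
      using that u assms(1,2) by (smt (verit) image_iff subset_iff)
  qed
qed

lemma lub_image_eq:
  assumes "\<And>x y. x \<in> P \<Longrightarrow> y \<in> P \<Longrightarrow> le' (H x) (H y) \<longleftrightarrow> le x y"
    and "\<And>x y. x \<in> H ` P \<Longrightarrow> y \<in> H ` P \<Longrightarrow> le' x y \<Longrightarrow> le' y x \<Longrightarrow> x = y"
    and "X \<subseteq> P" and "is_lub P le X u"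
  shows "lub (H ` P) le' (H ` X) = H u"
  by (rule lub_eqI[OF assms(2) is_lub_image[of P le' H le, OF assms(1,3,4)]])

lemma glb_image_eq:
  assumes "\<And>x y. x \<in> P \<Longrightarrow> y \<in> P \<Longrightarrow> le' (H x) (H y) \<longleftrightarrow> le x y"
    and "\<And>x y. x \<in> H ` P \<Longrightarrow> y \<in> H ` P \<Longrightarrow> le' x y \<Longrightarrow> le' y x \<Longrightarrow> x = y"
    and "X \<subseteq> P" and "is_glb P le X u"
  shows "glb (H ` P) le' (H ` X) = H u"
  unfolding glb_eq_lub_dual
  by (rule lub_image_eq[where le = "\<lambda>x y. le y x"]) (use assms in \<open>auto simp: is_glb_iff_is_lub_dual\<close>)

section \<open>Pseudocomplements and regular elements of a frame\<close>

locale frame =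
  fixes tp :: "'b::complete_lattice itself"
  assumes is_frame: "is_frame tp"
begin

lemma inf_Sup_distrib: "inf a (Sup B) = Sup (inf a ` B)" for a :: 'b
  using is_frame unfolding is_frame_def by blast

lemma inf_sup_distrib: "inf a (sup b c) = sup (inf a b) (inf a c)" for a :: 'b
  using inf_Sup_distrib[of a "{b, c}"] by simp

lemma inf_Sup_Sup_le:
  assumes "\<And>a b. a \<in> A \<Longrightarrow> b \<in> B \<Longrightarrow> inf a b \<le> (c::'b)"
  shows "inf (Sup A) (Sup B) \<le> c"
proof -
  have "inf (Sup A) b \<le> c" if "b \<in> B" for b
    using assms that by (auto simp: inf_commute[of "Sup A"] inf_Sup_distrib inf_commute intro: SUP_least)
  then show ?thesis
    by (auto simp: inf_Sup_distrib intro: SUP_least)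
qed

definition pcomp :: "'b \<Rightarrow> 'b" where
  "pcomp x = Sup {y. inf x y = bot}"

lemma inf_pcomp [simp]: "inf x (pcomp x) = bot"
  unfolding pcomp_def inf_Sup_distrib by (simp add: SUP_bot_conv)

lemma le_pcomp_iff: "y \<le> pcomp x \<longleftrightarrow> inf x y = bot"
proof
  assume "y \<le> pcomp x"
  then have "inf x y \<le> inf x (pcomp x)" by (intro inf_mono order_refl)
  then show "inf x y = bot" by (metis inf_pcomp le_bot)
next
  assume "inf x y = bot"
  then show "y \<le> pcomp x" unfolding pcomp_def by (simp add: Sup_upper)
qed

lemma pcomp_antimono: "x \<le> y \<Longrightarrow> pcomp y \<le> pcomp x"
  by (metis inf_pcomp inf_mono order_refl bot_unique le_pcomp_iff)

lemma le_pcomp_pcomp: "x \<le> pcomp (pcomp x)"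
  by (simp add: le_pcomp_iff inf_commute)

lemma pcomp_pcomp_pcomp [simp]: "pcomp (pcomp (pcomp x)) = pcomp x"
  by (simp add: order.antisym pcomp_antimono le_pcomp_pcomp)

lemma pcomp_pcomp_mono: "x \<le> y \<Longrightarrow> pcomp (pcomp x) \<le> pcomp (pcomp y)"
  by (simp add: pcomp_antimono)

lemma pcomp_bot [simp]: "pcomp bot = top"
  by (rule top_unique[THEN iffD1]) (simp add: le_pcomp_iff)

lemma pcomp_top [simp]: "pcomp top = bot"
  by (metis inf_pcomp inf_top_left)

lemma pcomp_eq_bot_iff: "pcomp x = bot \<longleftrightarrow> pcomp (pcomp x) = top"
  by (metis pcomp_bot pcomp_top pcomp_pcomp_pcomp)

lemma pcomp_Sup: "pcomp (Sup X) = (INF x\<in>X. pcomp x)"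
proof (rule order.antisym)
  show "pcomp (Sup X) \<le> (INF x\<in>X. pcomp x)"
    by (simp add: INF_greatest Sup_upper pcomp_antimono)
  have "inf (INF x\<in>X. pcomp x) x = bot" if "x \<in> X" for x
    using that by (metis INF_lower inf_mono order_refl inf_pcomp inf_commute bot_unique)
  then have "inf (INF x\<in>X. pcomp x) (Sup X) = bot"
    by (simp add: inf_Sup_distrib SUP_bot_conv)
  then show "(INF x\<in>X. pcomp x) \<le> pcomp (Sup X)"
    by (simp add: le_pcomp_iff inf_commute)
qed

lemma pcomp_sup: "pcomp (sup x y) = inf (pcomp x) (pcomp y)"
  using pcomp_Sup[of "{x, y}"] by simp

lemma pcomp_SUP_pcomp_pcomp: "pcomp (SUP i\<in>I. pcomp (pcomp (g i))) = pcomp (SUP i\<in>I. g i)"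
  by (simp add: pcomp_Sup image_image)

lemma inf_pcomp_pcomp_eq_bot: "inf a x = bot \<Longrightarrow> inf a (pcomp (pcomp x)) = bot"
  by (metis le_pcomp_iff pcomp_pcomp_pcomp inf_commute)

lemma pcomp_pcomp_inf: "pcomp (pcomp (inf x y)) = inf (pcomp (pcomp x)) (pcomp (pcomp y))"
proof (rule order.antisym)
  show "pcomp (pcomp (inf x y)) \<le> inf (pcomp (pcomp x)) (pcomp (pcomp y))"
    by (simp add: pcomp_pcomp_mono)
  let ?p = "pcomp (inf x y)"
  have "inf (inf ?p y) x = bot"
    by (metis inf_pcomp inf_commute inf_left_commute)
  then have "inf (inf ?p y) (pcomp (pcomp x)) = bot" by (rule inf_pcomp_pcomp_eq_bot)
  then have "inf (inf ?p (pcomp (pcomp x))) y = bot" by (simp add: ac_simps)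
  then have "inf (inf ?p (pcomp (pcomp x))) (pcomp (pcomp y)) = bot" by (rule inf_pcomp_pcomp_eq_bot)
  then show "inf (pcomp (pcomp x)) (pcomp (pcomp y)) \<le> pcomp ?p"
    by (simp add: le_pcomp_iff ac_simps)
qed

lemma inf_eq_bot_pcomp_pcomp: "inf x y = bot \<Longrightarrow> inf (pcomp (pcomp x)) (pcomp (pcomp y)) = bot"
  by (metis pcomp_pcomp_inf pcomp_bot pcomp_top)

definition regular :: "'b set" where
  "regular = {x. pcomp (pcomp x) = x}"

lemma pcomp_in_regular: "pcomp x \<in> regular"
  by (simp add: regular_def)

lemma Inf_in_regular:
  assumes "X \<subseteq> regular"
  shows "Inf X \<in> regular"
proof -
  have "Inf X = (INF x\<in>X. pcomp (pcomp x))"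
    using assms by (simp add: regular_def subset_iff)
  also have "\<dots> = pcomp (SUP x\<in>X. pcomp x)"
    by (simp add: pcomp_Sup image_image)
  finally show ?thesis by (simp add: pcomp_in_regular)
qed

lemma is_glb_regular: "X \<subseteq> regular \<Longrightarrow> is_glb regular (\<le>) X (Inf X)"
  unfolding is_glb_def by (auto intro: Inf_in_regular Inf_lower Inf_greatest)

lemma is_lub_regular: "X \<subseteq> regular \<Longrightarrow> is_lub regular (\<le>) X (pcomp (pcomp (Sup X)))"
  unfolding is_lub_def
  by (auto simp: regular_def intro: pcomp_in_regular order.trans[OF Sup_upper le_pcomp_pcomp])
     (metis Sup_least pcomp_pcomp_mono)

end

section \<open>Real functions on a frame\<close>

lemma SUP_greaterThan_SUP_greaterThan:
  fixes g :: "'a::dense_linorder \<Rightarrow> 'b::complete_lattice"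
  shows "(SUP s\<in>{r<..}. SUP t\<in>{s<..}. g t) = (SUP t\<in>{r<..}. g t)"
proof (rule order.antisym)
  show "(SUP s\<in>{r<..}. SUP t\<in>{s<..}. g t) \<le> (SUP t\<in>{r<..}. g t)"
    by (rule SUP_least, rule SUP_subset_mono) auto
  show "(SUP t\<in>{r<..}. g t) \<le> (SUP s\<in>{r<..}. SUP t\<in>{s<..}. g t)"
  proof (rule SUP_least)
    fix t assume "t \<in> {r<..}"
    then obtain m where "r < m" "m < t" using dense by auto
    then show "g t \<le> (SUP s\<in>{r<..}. SUP t\<in>{s<..}. g t)"
      by (meson SUP_upper2 greaterThan_iff order_refl)
  qed
qed

lemma SUP_lessThan_SUP_lessThan:
  fixes g :: "'a::dense_linorder \<Rightarrow> 'b::complete_lattice"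
  shows "(SUP r\<in>{..<s}. SUP t\<in>{..<r}. g t) = (SUP t\<in>{..<s}. g t)"
proof (rule order.antisym)
  show "(SUP r\<in>{..<s}. SUP t\<in>{..<r}. g t) \<le> (SUP t\<in>{..<s}. g t)"
    by (rule SUP_least, rule SUP_subset_mono) auto
  show "(SUP t\<in>{..<s}. g t) \<le> (SUP r\<in>{..<s}. SUP t\<in>{..<r}. g t)"
  proof (rule SUP_least)
    fix t assume "t \<in> {..<s}"
    then obtain m where "t < m" "m < s" using dense by auto
    then show "g t \<le> (SUP r\<in>{..<s}. SUP t\<in>{..<r}. g t)"
      by (meson SUP_upper2 lessThan_iff order_refl)
  qed
qed

lemma SUP_greaterThan_uminus:
  fixes r :: "'a::ordered_ab_group_add"
  shows "(SUP s\<in>{r<..}. g (- s)) = (SUP t\<in>{..<- r}. g t)"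
  by (metis image_uminus_greaterThan image_image)

lemma SUP_lessThan_uminus:
  fixes s :: "'a::ordered_ab_group_add"
  shows "(SUP r\<in>{..<s}. g (- r)) = (SUP t\<in>{- s<..}. g t)"
  by (metis image_uminus_lessThan image_image)

lemma hom_le_antisym:
  fixes f g :: "(rat \<Rightarrow> 'b::order) \<times> (rat \<Rightarrow> 'b)"
  shows "hom_le (\<le>) f g \<Longrightarrow> hom_le (\<le>) g f \<Longrightarrow> f = g"
  unfolding hom_le_def by (metis order.antisym prod_eqI ext)

definition pinf :: "(rat \<Rightarrow> 'b::{top,bot}) \<times> (rat \<Rightarrow> 'b)" where
  "pinf = (\<lambda>_. top, \<lambda>_. bot)"

definition minf :: "(rat \<Rightarrow> 'b::{top,bot}) \<times> (rat \<Rightarrow> 'b)" where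
  "minf = (\<lambda>_. bot, \<lambda>_. top)"

definition hom_join ::
    "(rat \<Rightarrow> 'b::lattice) \<times> (rat \<Rightarrow> 'b) \<Rightarrow> (rat \<Rightarrow> 'b) \<times> (rat \<Rightarrow> 'b) \<Rightarrow> (rat \<Rightarrow> 'b) \<times> (rat \<Rightarrow> 'b)"
  where
  "hom_join f g = (\<lambda>r. sup (fst f r) (fst g r), \<lambda>s. inf (snd f s) (snd g s))"

lemma hom_le_hom_join_iff:
  "hom_le (\<le>) (hom_join f g) h \<longleftrightarrow> hom_le (\<le>) f h \<and> hom_le (\<le>) g h"
  unfolding hom_le_def hom_join_def by auto

lemma hom_le_hom_join1: "hom_le (\<le>) f (hom_join f g)"
  and hom_le_hom_join2: "hom_le (\<le>) g (hom_join f g)"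
  unfolding hom_le_def hom_join_def by auto

text \<open>\<open>negate f\<close> is the real function \<open>-f\<close>.\<close>
definition negate :: "(rat \<Rightarrow> 'b) \<times> (rat \<Rightarrow> 'b) \<Rightarrow> (rat \<Rightarrow> 'b) \<times> (rat \<Rightarrow> 'b)" where
  "negate f = (\<lambda>r. snd f (- r), \<lambda>s. fst f (- s))"

lemma negate_negate [simp]: "negate (negate f) = f"
  by (simp add: negate_def)

lemma hom_le_negate_iff [simp]: "hom_le le (negate f) (negate g) \<longleftrightarrow> hom_le le g f"
  unfolding hom_le_def negate_def by (metis fst_conv snd_conv minus_minus)

lemma negate_pinf [simp]: "negate pinf = minf"
  by (simp add: negate_def pinf_def minf_def)

lemma range_snd_negate [simp]: "range (snd (negate f)) = range (fst f)"
  unfolding negate_def by (auto simp: image_iff) (metis minus_minus)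

context frame
begin

definition is_LIR_hom :: "(rat \<Rightarrow> 'b) \<times> (rat \<Rightarrow> 'b) \<Rightarrow> bool" where
  "is_LIR_hom f \<longleftrightarrow> (\<forall>r s. r \<ge> s \<longrightarrow> inf (fst f r) (snd f s) = bot)
     \<and> (\<forall>r. fst f r = (SUP s\<in>{r<..}. fst f s))
     \<and> (\<forall>s. snd f s = (SUP r\<in>{..<s}. snd f r))"

lemma LIR_hom_disjoint: "is_LIR_hom f \<Longrightarrow> s \<le> r \<Longrightarrow> inf (fst f r) (snd f s) = bot"
  unfolding is_LIR_hom_def by blast

lemma LIR_hom_fst_eq: "is_LIR_hom f \<Longrightarrow> fst f r = (SUP s\<in>{r<..}. fst f s)"
  unfolding is_LIR_hom_def by blast

lemma LIR_hom_snd_eq: "is_LIR_hom f \<Longrightarrow> snd f s = (SUP r\<in>{..<s}. snd f r)"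
  unfolding is_LIR_hom_def by blast

lemma LIR_hom_snd_mono:
  assumes "is_LIR_hom f" and "r \<le> s"
  shows "snd f r \<le> snd f s"
proof (cases "r = s")
  case False
  with assms(2) have "snd f r \<le> (SUP t\<in>{..<s}. snd f t)" by (intro SUP_upper) simp
  then show ?thesis using LIR_hom_snd_eq[OF assms(1), of s] by simp
qed simp

lemma LIR_hom_hom_join:
  assumes f: "is_LIR_hom f" and g: "is_LIR_hom g"
  shows "is_LIR_hom (hom_join f g)"
  unfolding is_LIR_hom_def hom_join_def fst_conv snd_conv
proof (intro conjI allI impI)
  fix r s :: rat assume "s \<le> r"
  then have "inf (fst f r) (snd f s) = bot" "inf (fst g r) (snd g s) = bot"
    using LIR_hom_disjoint f g by blast+
  moreover have "inf (inf (snd f s) (snd g s)) (fst f r) \<le> inf (fst f r) (snd f s)"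
    and "inf (inf (snd f s) (snd g s)) (fst g r) \<le> inf (fst g r) (snd g s)"
    by (simp_all add: le_infI1 le_infI2)
  ultimately have "inf (inf (snd f s) (snd g s)) (sup (fst f r) (fst g r)) = bot"
    by (simp add: inf_sup_distrib bot_unique)
  then show "inf (sup (fst f r) (fst g r)) (inf (snd f s) (snd g s)) = bot"
    by (simp add: inf_commute)
next
  fix r
  show "sup (fst f r) (fst g r) = (SUP s\<in>{r<..}. sup (fst f s) (fst g s))"
    by (simp add: SUP_sup_distrib[symmetric] LIR_hom_fst_eq[OF f, symmetric] LIR_hom_fst_eq[OF g, symmetric])
next
  fix s
  show "inf (snd f s) (snd g s) = (SUP r\<in>{..<s}. inf (snd f r) (snd g r))"
  proof (rule order.antisym)
    have "inf a b \<le> (SUP r\<in>{..<s}. inf (snd f r) (snd g r))"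
      if "a \<in> snd f ` {..<s}" and "b \<in> snd g ` {..<s}" for a b
    proof -
      from that obtain r r' where "a = snd f r" "b = snd g r'" "r < s" "r' < s" by auto
      then have "inf a b \<le> inf (snd f (max r r')) (snd g (max r r'))"
        using LIR_hom_snd_mono[OF f, of r "max r r'"] LIR_hom_snd_mono[OF g, of r' "max r r'"]
        by (simp add: le_infI1 le_infI2)
      also have "\<dots> \<le> (SUP r\<in>{..<s}. inf (snd f r) (snd g r))"
        using \<open>r < s\<close> \<open>r' < s\<close> by (intro SUP_upper) simp
      finally show ?thesis .
    qed
    then show "inf (snd f s) (snd g s) \<le> (SUP r\<in>{..<s}. inf (snd f r) (snd g r))"
      by (subst LIR_hom_snd_eq[OF f], subst LIR_hom_snd_eq[OF g]) (rule inf_Sup_Sup_le)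
    show "(SUP r\<in>{..<s}. inf (snd f r) (snd g r)) \<le> inf (snd f s) (snd g s)"
      using LIR_hom_snd_mono[OF f] LIR_hom_snd_mono[OF g]
      by (auto intro!: SUP_least intro: le_infI1 le_infI2)
  qed
qed

definition Fbar_M :: "((rat \<Rightarrow> 'b) \<times> (rat \<Rightarrow> 'b)) set" where
  "Fbar_M = {f. is_LIR_hom f
     \<and> (\<forall>r s. r < s \<longrightarrow> pcomp (fst f r) \<le> snd f s \<and> pcomp (snd f s) \<le> fst f r)}"

lemma Fbar_M_LIR_hom: "f \<in> Fbar_M \<Longrightarrow> is_LIR_hom f"
  by (simp add: Fbar_M_def)

lemma Fbar_M_pcomp_fst_le: "f \<in> Fbar_M \<Longrightarrow> r < s \<Longrightarrow> pcomp (fst f r) \<le> snd f s"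
  by (simp add: Fbar_M_def)

lemma Fbar_M_pcomp_snd_le: "f \<in> Fbar_M \<Longrightarrow> r < s \<Longrightarrow> pcomp (snd f s) \<le> fst f r"
  by (simp add: Fbar_M_def)

lemma Fbar_M_fst_eq:
  assumes "f \<in> Fbar_M"
  shows "fst f r = (SUP s\<in>{r<..}. pcomp (snd f s))"
proof (rule order.antisym)
  have "fst f s \<le> pcomp (snd f s)" for s
    using LIR_hom_disjoint[OF Fbar_M_LIR_hom[OF assms], of s s] by (simp add: le_pcomp_iff inf_commute)
  then show "fst f r \<le> (SUP s\<in>{r<..}. pcomp (snd f s))"
    by (subst LIR_hom_fst_eq[OF Fbar_M_LIR_hom[OF assms]]) (rule SUP_mono', blast)
  show "(SUP s\<in>{r<..}. pcomp (snd f s)) \<le> fst f r"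
    using Fbar_M_pcomp_snd_le[OF assms] by (auto intro: SUP_least)
qed

lemma Fbar_M_snd_eq:
  assumes "f \<in> Fbar_M"
  shows "snd f s = (SUP r\<in>{..<s}. pcomp (fst f r))"
proof (rule order.antisym)
  have "snd f r \<le> pcomp (fst f r)" for r
    using LIR_hom_disjoint[OF Fbar_M_LIR_hom[OF assms], of r r] by (simp add: le_pcomp_iff)
  then show "snd f s \<le> (SUP r\<in>{..<s}. pcomp (fst f r))"
    by (subst LIR_hom_snd_eq[OF Fbar_M_LIR_hom[OF assms]]) (rule SUP_mono', blast)
  show "(SUP r\<in>{..<s}. pcomp (fst f r)) \<le> snd f s"
    using Fbar_M_pcomp_fst_le[OF assms] by (auto intro: SUP_least)
qed

text \<open>\<open>Cbar_B\<close> and \<open>C_B\<close> are \<open>C\<close> of the Booleanization \<open>regular\<close> without and with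
  (r5), (r6); in \<open>regular\<close> the join of \<open>X\<close> is \<open>pcomp (pcomp (Sup X))\<close>, while meets,
  \<open>bot\<close> and \<open>top\<close> are those of the frame.\<close>
definition Cbar_B :: "((rat \<Rightarrow> 'b) \<times> (rat \<Rightarrow> 'b)) set" where
  "Cbar_B = {f. (\<forall>r. fst f r \<in> regular) \<and> (\<forall>s. snd f s \<in> regular)
     \<and> (\<forall>r s. r \<ge> s \<longrightarrow> inf (fst f r) (snd f s) = bot)
     \<and> (\<forall>r. fst f r = pcomp (pcomp (SUP s\<in>{r<..}. fst f s)))
     \<and> (\<forall>s. snd f s = pcomp (pcomp (SUP r\<in>{..<s}. snd f r)))
     \<and> (\<forall>r s. r < s \<longrightarrow> pcomp (pcomp (sup (fst f r) (snd f s))) = top)}"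

definition C_B :: "((rat \<Rightarrow> 'b) \<times> (rat \<Rightarrow> 'b)) set" where
  "C_B = {f \<in> Cbar_B. pcomp (pcomp (Sup (range (fst f)))) = top
                    \<and> pcomp (pcomp (Sup (range (snd f)))) = top}"

lemma Cbar_B_fst_regular: "f \<in> Cbar_B \<Longrightarrow> pcomp (pcomp (fst f r)) = fst f r"
  and Cbar_B_snd_regular: "f \<in> Cbar_B \<Longrightarrow> pcomp (pcomp (snd f s)) = snd f s"
  unfolding Cbar_B_def regular_def by blast+

lemma Cbar_B_disjoint: "f \<in> Cbar_B \<Longrightarrow> s \<le> r \<Longrightarrow> inf (fst f r) (snd f s) = bot"
  unfolding Cbar_B_def by blast

lemma Cbar_B_fst_eq: "f \<in> Cbar_B \<Longrightarrow> fst f r = pcomp (pcomp (SUP s\<in>{r<..}. fst f s))"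
  and Cbar_B_snd_eq: "f \<in> Cbar_B \<Longrightarrow> snd f s = pcomp (pcomp (SUP r\<in>{..<s}. snd f r))"
  unfolding Cbar_B_def by blast+

lemma Cbar_B_pcomp_le:
  assumes "f \<in> Cbar_B" and "r < s"
  shows "pcomp (snd f s) \<le> fst f r" and "pcomp (fst f r) \<le> snd f s"
proof -
  have "pcomp (pcomp (sup (fst f r) (snd f s))) = top"
    using assms unfolding Cbar_B_def by blast
  then have "inf (pcomp (fst f r)) (pcomp (snd f s)) = bot"
    by (metis pcomp_eq_bot_iff pcomp_sup)
  then show "pcomp (snd f s) \<le> fst f r" and "pcomp (fst f r) \<le> snd f s"
    by (metis le_pcomp_iff inf_commute Cbar_B_fst_regular[OF assms(1)] Cbar_B_snd_regular[OF assms(1)])+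
qed

lemma Cbar_B_fst_antimono:
  assumes "f \<in> Cbar_B" and "r \<le> s"
  shows "fst f s \<le> fst f r"
proof (cases "r = s")
  case False
  with assms(2) have "fst f s \<le> pcomp (pcomp (SUP t\<in>{r<..}. fst f t))"
    by (intro order.trans[OF SUP_upper le_pcomp_pcomp]) simp
  then show ?thesis by (simp only: Cbar_B_fst_eq[OF assms(1), symmetric])
qed simp

definition beta_M :: "(rat \<Rightarrow> 'b) \<times> (rat \<Rightarrow> 'b) \<Rightarrow> (rat \<Rightarrow> 'b) \<times> (rat \<Rightarrow> 'b)" where
  "beta_M f = (\<lambda>r. pcomp (pcomp (fst f r)), \<lambda>s. pcomp (pcomp (snd f s)))"

definition beta_inv :: "(rat \<Rightarrow> 'b) \<times> (rat \<Rightarrow> 'b) \<Rightarrow> (rat \<Rightarrow> 'b) \<times> (rat \<Rightarrow> 'b)" where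
  "beta_inv f = (\<lambda>r. SUP s\<in>{r<..}. pcomp (snd f s), \<lambda>s. SUP r\<in>{..<s}. pcomp (fst f r))"

lemma hom_le_beta_M: "hom_le (\<le>) f g \<Longrightarrow> hom_le (\<le>) (beta_M f) (beta_M g)"
  unfolding hom_le_def beta_M_def by (simp add: pcomp_pcomp_mono)

lemma hom_le_beta_inv: "hom_le (\<le>) f g \<Longrightarrow> hom_le (\<le>) (beta_inv f) (beta_inv g)"
  unfolding hom_le_def beta_inv_def by (auto intro!: SUP_mono' pcomp_antimono)

text \<open>Since \<open>pcomp\<close> does not see the difference between \<open>x\<close> and \<open>pcomp (pcomp x)\<close>,
  the representation by \<open>Fbar_M_fst_eq\<close> and \<open>Fbar_M_snd_eq\<close> recovers \<open>f\<close> from \<open>beta_M f\<close>.\<close>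
lemma beta_inv_beta_M: "f \<in> Fbar_M \<Longrightarrow> beta_inv (beta_M f) = f"
  unfolding beta_inv_def beta_M_def
  by (simp add: Fbar_M_fst_eq[symmetric] Fbar_M_snd_eq[symmetric])

lemma hom_le_beta_M_iff:
  assumes "f \<in> Fbar_M" and "g \<in> Fbar_M"
  shows "hom_le (\<le>) (beta_M f) (beta_M g) \<longleftrightarrow> hom_le (\<le>) f g"
proof
  assume "hom_le (\<le>) (beta_M f) (beta_M g)"
  then have "hom_le (\<le>) (beta_inv (beta_M f)) (beta_inv (beta_M g))" by (rule hom_le_beta_inv)
  then show "hom_le (\<le>) f g" using assms by (simp add: beta_inv_beta_M)
qed (rule hom_le_beta_M)

lemma beta_M_in_Cbar_B:
  assumes f: "is_LIR_hom f" and le: "\<And>r s. r < s \<Longrightarrow> pcomp (fst f r) \<le> snd f s"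
  shows "beta_M f \<in> Cbar_B"
  unfolding Cbar_B_def beta_M_def mem_Collect_eq fst_conv snd_conv
proof (intro conjI allI impI)
  show "pcomp (pcomp (fst f r)) \<in> regular" for r
    by (rule pcomp_in_regular)
  show "pcomp (pcomp (snd f s)) \<in> regular" for s
    by (rule pcomp_in_regular)
  show "inf (pcomp (pcomp (fst f r))) (pcomp (pcomp (snd f s))) = bot" if "s \<le> r" for r s
    using LIR_hom_disjoint[OF f that] by (rule inf_eq_bot_pcomp_pcomp)
  show "pcomp (pcomp (fst f r)) = pcomp (pcomp (SUP s\<in>{r<..}. pcomp (pcomp (fst f s))))" for r
    by (simp only: pcomp_SUP_pcomp_pcomp LIR_hom_fst_eq[OF f, symmetric])
  show "pcomp (pcomp (snd f s)) = pcomp (pcomp (SUP r\<in>{..<s}. pcomp (pcomp (snd f r))))" for s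
    by (simp only: pcomp_SUP_pcomp_pcomp LIR_hom_snd_eq[OF f, symmetric])
  show "pcomp (pcomp (sup (pcomp (pcomp (fst f r))) (pcomp (pcomp (snd f s))))) = top" if "r < s" for r s
  proof -
    have "pcomp (sup (pcomp (pcomp (fst f r))) (pcomp (pcomp (snd f s))))
        = inf (pcomp (fst f r)) (pcomp (snd f s))"
      by (simp add: pcomp_sup)
    also have "\<dots> \<le> inf (snd f s) (pcomp (snd f s))"
      using le[OF that] by (rule inf_mono) simp
    finally show ?thesis by (simp add: pcomp_eq_bot_iff[symmetric] bot_unique)
  qed
qed

lemma beta_M_beta_inv:
  assumes f: "f \<in> Cbar_B"
  shows "beta_M (beta_inv f) = f"
proof -
  have "pcomp (pcomp (SUP s\<in>{r<..}. pcomp (snd f s))) = fst f r" for r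
  proof (rule order.antisym)
    have "(SUP s\<in>{r<..}. pcomp (snd f s)) \<le> fst f r"
      using Cbar_B_pcomp_le(1)[OF f] by (auto intro: SUP_least)
    then show "pcomp (pcomp (SUP s\<in>{r<..}. pcomp (snd f s))) \<le> fst f r"
      by (metis pcomp_pcomp_mono Cbar_B_fst_regular[OF f])
    have "fst f s \<le> pcomp (snd f s)" for s
      using Cbar_B_disjoint[OF f, of s s] by (simp add: le_pcomp_iff inf_commute)
    then have "(SUP s\<in>{r<..}. fst f s) \<le> (SUP s\<in>{r<..}. pcomp (snd f s))"
      by (blast intro: SUP_mono')
    then show "fst f r \<le> pcomp (pcomp (SUP s\<in>{r<..}. pcomp (snd f s)))"
      by (metis pcomp_pcomp_mono Cbar_B_fst_eq[OF f])
  qed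
  moreover have "pcomp (pcomp (SUP r\<in>{..<s}. pcomp (fst f r))) = snd f s" for s
  proof (rule order.antisym)
    have "(SUP r\<in>{..<s}. pcomp (fst f r)) \<le> snd f s"
      using Cbar_B_pcomp_le(2)[OF f] by (auto intro: SUP_least)
    then show "pcomp (pcomp (SUP r\<in>{..<s}. pcomp (fst f r))) \<le> snd f s"
      by (metis pcomp_pcomp_mono Cbar_B_snd_regular[OF f])
    have "snd f r \<le> pcomp (fst f r)" for r
      using Cbar_B_disjoint[OF f, of r r] by (simp add: le_pcomp_iff)
    then have "(SUP r\<in>{..<s}. snd f r) \<le> (SUP r\<in>{..<s}. pcomp (fst f r))"
      by (blast intro: SUP_mono')
    then show "snd f s \<le> pcomp (pcomp (SUP r\<in>{..<s}. pcomp (fst f r)))"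
      by (metis pcomp_pcomp_mono Cbar_B_snd_eq[OF f])
  qed
  ultimately show ?thesis
    unfolding beta_M_def beta_inv_def by (simp add: prod_eq_iff)
qed

lemma beta_inv_in_Fbar_M:
  assumes f: "f \<in> Cbar_B"
  shows "beta_inv f \<in> Fbar_M"
proof -
  define u where "u r = (SUP s\<in>{r<..}. pcomp (snd f s))" for r
  define d where "d s = (SUP r\<in>{..<s}. pcomp (fst f r))" for s
  have inv: "beta_inv f = (u, d)"
    unfolding beta_inv_def u_def d_def by simp
  have pcomp_u: "pcomp (u r) = pcomp (fst f r)" for r
    using arg_cong[OF beta_M_beta_inv[OF f], of "\<lambda>g. pcomp (fst g r)"]
    unfolding inv beta_M_def by simp
  have pcomp_d: "pcomp (d s) = pcomp (snd f s)" for s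
    using arg_cong[OF beta_M_beta_inv[OF f], of "\<lambda>g. pcomp (snd g s)"]
    unfolding inv beta_M_def by simp
  have "inf (u r) (d s) = bot" if "s \<le> r" for r s
  proof -
    have "d s \<le> pcomp (fst f r)"
      unfolding d_def using that
      by (auto intro!: SUP_least pcomp_antimono Cbar_B_fst_antimono[OF f])
    then show ?thesis by (simp add: le_pcomp_iff pcomp_u[symmetric])
  qed
  moreover have "u r = (SUP s\<in>{r<..}. u s)" for r
    unfolding u_def by (rule SUP_greaterThan_SUP_greaterThan[symmetric])
  moreover have "d s = (SUP r\<in>{..<s}. d r)" for s
    unfolding d_def by (rule SUP_lessThan_SUP_lessThan[symmetric])
  moreover have "pcomp (u r) \<le> d s" and "pcomp (d s) \<le> u r" if "r < s" for r s
    unfolding pcomp_u pcomp_d unfolding u_def d_def using that by (auto intro: SUP_upper)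
  ultimately show ?thesis
    unfolding inv Fbar_M_def is_LIR_hom_def mem_Collect_eq fst_conv snd_conv by blast
qed

lemma beta_M_in_Cbar_B_if_Fbar_M: "f \<in> Fbar_M \<Longrightarrow> beta_M f \<in> Cbar_B"
  by (rule beta_M_in_Cbar_B[OF Fbar_M_LIR_hom Fbar_M_pcomp_fst_le])

lemma bij_betw_beta_M: "bij_betw beta_M Fbar_M Cbar_B"
  by (rule bij_betw_byWitness[where f' = beta_inv])
     (auto simp: beta_inv_beta_M beta_M_beta_inv beta_inv_in_Fbar_M beta_M_in_Cbar_B_if_Fbar_M)

lemma pinf_in_Fbar_M: "pinf \<in> Fbar_M"
  unfolding Fbar_M_def is_LIR_hom_def pinf_def by simp

lemma Fbar_M_eq_pinf:
  assumes "f \<in> Fbar_M" and "\<And>s. snd f s = bot"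
  shows "f = pinf"
proof -
  have "fst f r = top" for r
    using Fbar_M_pcomp_snd_le[OF assms(1), of r "r + 1"] assms(2) by (simp add: top_unique)
  with assms(2) show ?thesis by (simp add: pinf_def prod_eq_iff fun_eq_iff)
qed

lemma negate_in_Fbar_M:
  assumes "f \<in> Fbar_M"
  shows "negate f \<in> Fbar_M"
  unfolding Fbar_M_def is_LIR_hom_def negate_def mem_Collect_eq fst_conv snd_conv
proof (intro conjI allI impI)
  have f: "is_LIR_hom f" by (rule Fbar_M_LIR_hom[OF assms])
  show "inf (snd f (- r)) (fst f (- s)) = bot" if "s \<le> r" for r s
    using LIR_hom_disjoint[OF f, of "- r" "- s"] that by (simp add: inf_commute)
  show "snd f (- r) = (SUP s\<in>{r<..}. snd f (- s))" for r
    by (simp only: SUP_greaterThan_uminus[where g = "snd f"] LIR_hom_snd_eq[OF f, symmetric])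
  show "fst f (- s) = (SUP r\<in>{..<s}. fst f (- r))" for s
    by (simp only: SUP_lessThan_uminus[where g = "fst f"] LIR_hom_fst_eq[OF f, symmetric])
  show "pcomp (snd f (- r)) \<le> fst f (- s)" and "pcomp (fst f (- s)) \<le> snd f (- r)" if "r < s" for r s
    using Fbar_M_pcomp_snd_le[OF assms, of "- s" "- r"] Fbar_M_pcomp_fst_le[OF assms, of "- s" "- r"] that
    by simp_all
qed

lemma negate_in_Fbar_M_iff [simp]: "negate f \<in> Fbar_M \<longleftrightarrow> f \<in> Fbar_M"
  by (metis negate_in_Fbar_M negate_negate)

lemma is_glb_if_is_lub_negate:
  assumes "is_lub Fbar_M (hom_le (\<le>)) (negate ` X) h"
  shows "is_glb Fbar_M (hom_le (\<le>)) X (negate h)"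
proof -
  have h: "h \<in> Fbar_M" and ub: "\<And>x. x \<in> X \<Longrightarrow> hom_le (\<le>) (negate x) h"
    and least: "\<And>v. v \<in> Fbar_M \<Longrightarrow> \<forall>x\<in>X. hom_le (\<le>) (negate x) v \<Longrightarrow> hom_le (\<le>) h v"
    using assms unfolding is_lub_def by auto
  show ?thesis
    unfolding is_glb_def
  proof (intro conjI ballI impI)
    show "negate h \<in> Fbar_M" using h by simp
    show "hom_le (\<le>) (negate h) x" if "x \<in> X" for x
      using ub[OF that] hom_le_negate_iff[of "(\<le>)" x "negate h"] by simp
    show "hom_le (\<le>) v (negate h)" if "v \<in> Fbar_M" and "\<forall>x\<in>X. hom_le (\<le>) v x" for v
      using least[of "negate v"] that hom_le_negate_iff[of "(\<le>)" "negate v" h] by simp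
  qed
qed

lemma beta_M_hom_join_in_Cbar_B:
  assumes f: "f \<in> Fbar_M" and g: "g \<in> Fbar_M"
  shows "beta_M (hom_join f g) \<in> Cbar_B"
proof (rule beta_M_in_Cbar_B)
  show "is_LIR_hom (hom_join f g)"
    by (intro LIR_hom_hom_join Fbar_M_LIR_hom f g)
  show "pcomp (fst (hom_join f g) r) \<le> snd (hom_join f g) s" if "r < s" for r s
    using Fbar_M_pcomp_fst_le[OF f that] Fbar_M_pcomp_fst_le[OF g that]
    by (simp add: hom_join_def pcomp_sup le_infI1 le_infI2)
qed

lemma is_lub_Fbar_M:
  assumes f: "f \<in> Fbar_M" and g: "g \<in> Fbar_M"
  shows "is_lub Fbar_M (hom_le (\<le>)) {f, g} (beta_inv (beta_M (hom_join f g)))"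
proof -
  let ?j = "beta_M (hom_join f g)"
  have j: "?j \<in> Cbar_B" by (rule beta_M_hom_join_in_Cbar_B[OF f g])
  have h: "beta_inv ?j \<in> Fbar_M" by (rule beta_inv_in_Fbar_M[OF j])
  have le_h: "hom_le (\<le>) x (beta_inv ?j) \<longleftrightarrow> hom_le (\<le>) (beta_M x) ?j"
    and h_le: "hom_le (\<le>) (beta_inv ?j) x \<longleftrightarrow> hom_le (\<le>) ?j (beta_M x)" if "x \<in> Fbar_M" for x
    using hom_le_beta_M_iff[OF that h] hom_le_beta_M_iff[OF h that] by (simp_all add: beta_M_beta_inv[OF j])
  show ?thesis
    unfolding is_lub_def
  proof (intro conjI ballI impI)
    show "beta_inv ?j \<in> Fbar_M" by (rule h)
    show "hom_le (\<le>) x (beta_inv ?j)" if "x \<in> {f, g}" for x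
      using that f g by (auto simp: le_h intro!: hom_le_beta_M hom_le_hom_join1 hom_le_hom_join2)
    show "hom_le (\<le>) (beta_inv ?j) v" if "v \<in> Fbar_M" and "\<forall>x\<in>{f, g}. hom_le (\<le>) x v" for v
      using that by (simp add: h_le hom_le_beta_M hom_le_hom_join_iff)
  qed
qed

lemma lub_Fbar_M:
  "f \<in> Fbar_M \<Longrightarrow> g \<in> Fbar_M \<Longrightarrow> lub Fbar_M (hom_le (\<le>)) {f, g} = beta_inv (beta_M (hom_join f g))"
  by (rule lub_eqI[OF hom_le_antisym is_lub_Fbar_M])

lemma is_glb_Fbar_M:
  assumes "f \<in> Fbar_M" and "g \<in> Fbar_M"
  shows "is_glb Fbar_M (hom_le (\<le>)) {f, g} (negate (lub Fbar_M (hom_le (\<le>)) {negate f, negate g}))"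
  using assms by (intro is_glb_if_is_lub_negate) (simp add: lub_Fbar_M is_lub_Fbar_M)

lemma glb_Fbar_M:
  "f \<in> Fbar_M \<Longrightarrow> g \<in> Fbar_M
    \<Longrightarrow> glb Fbar_M (hom_le (\<le>)) {f, g} = negate (lub Fbar_M (hom_le (\<le>)) {negate f, negate g})"
  by (rule glb_eqI[OF hom_le_antisym is_glb_Fbar_M])

lemma lub_pinf_cancel_imp:
  assumes f: "f \<in> Fbar_M"
    and cancel: "\<forall>g\<in>Fbar_M. lub Fbar_M (hom_le (\<le>)) {f, g} = pinf \<longrightarrow> g = pinf"
  shows "pcomp (Sup (range (snd f))) = bot"
proof -
  let ?S = "Sup (range (snd f))"
  define g :: "(rat \<Rightarrow> 'b) \<times> (rat \<Rightarrow> 'b)" where "g = (\<lambda>_. pcomp (pcomp ?S), \<lambda>_. pcomp ?S)"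
  have g: "g \<in> Fbar_M"
    unfolding g_def Fbar_M_def is_LIR_hom_def by (simp add: inf_commute)
  txt \<open>Every upper bound of \<open>f\<close> and \<open>g\<close> has its \<open>snd\<close> below both \<open>?S\<close> and \<open>pcomp ?S\<close>.\<close>
  have is_lub_pinf: "is_lub Fbar_M (hom_le (\<le>)) {f, g} pinf"
    unfolding is_lub_def
  proof (intro conjI ballI impI)
    show "pinf \<in> Fbar_M" by (rule pinf_in_Fbar_M)
    show "hom_le (\<le>) x pinf" for x :: "(rat \<Rightarrow> 'b) \<times> (rat \<Rightarrow> 'b)"
      by (simp add: hom_le_def pinf_def)
    show "hom_le (\<le>) pinf v" if v: "v \<in> Fbar_M" and ub: "\<forall>x\<in>{f, g}. hom_le (\<le>) x v" for v
    proof -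
      have "snd v s \<le> ?S" and "snd v s \<le> pcomp ?S" for s
        using ub by (auto simp: hom_le_def g_def intro: order.trans[OF _ SUP_upper])
      then have "snd v s = bot" for s by (metis inf_pcomp le_inf_iff le_bot)
      then have "v = pinf" by (rule Fbar_M_eq_pinf[OF v])
      then show ?thesis by (simp add: hom_le_def)
    qed
  qed
  have "lub Fbar_M (hom_le (\<le>)) {f, g} = pinf"
    by (rule lub_eqI[OF hom_le_antisym is_lub_pinf])
  with cancel g have "g = pinf" by blast
  then show ?thesis by (simp add: g_def pinf_def fun_eq_iff)
qed

lemma lub_pinf_cancel_if:
  assumes f: "f \<in> Fbar_M" and S: "pcomp (Sup (range (snd f))) = bot"
    and g: "g \<in> Fbar_M" and lub: "lub Fbar_M (hom_le (\<le>)) {f, g} = pinf"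
  shows "g = pinf"
proof (rule Fbar_M_eq_pinf[OF g])
  fix s
  have "beta_M (beta_inv (beta_M (hom_join f g))) = beta_M pinf"
    using lub by (simp add: lub_Fbar_M f g)
  then have "beta_M (hom_join f g) = pinf"
    by (simp add: beta_M_beta_inv beta_M_hom_join_in_Cbar_B f g) (simp add: beta_M_def pinf_def)
  then have "pcomp (pcomp (inf (snd f t) (snd g t))) = bot" for t
    by (simp add: beta_M_def hom_join_def pinf_def prod_eq_iff fun_eq_iff)
  then have disjoint: "inf (snd f t) (snd g t) = bot" for t
    by (metis le_pcomp_pcomp bot_unique)
  have "inf (snd g s) (snd f t) = bot" for t
  proof -
    have "inf (snd g s) (snd f t) \<le> inf (snd f (max s t)) (snd g (max s t))"
      using LIR_hom_snd_mono[OF Fbar_M_LIR_hom[OF f], of t "max s t"]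
        LIR_hom_snd_mono[OF Fbar_M_LIR_hom[OF g], of s "max s t"]
      by (simp add: le_infI1 le_infI2)
    then show ?thesis by (simp add: disjoint bot_unique)
  qed
  then have "inf (snd g s) (Sup (range (snd f))) = bot"
    by (simp add: inf_Sup_distrib SUP_bot_conv)
  then have "snd g s \<le> pcomp (Sup (range (snd f)))"
    by (simp add: le_pcomp_iff inf_commute)
  with S show "snd g s = bot" by (simp add: bot_unique)
qed

lemma lub_pinf_cancel_iff:
  "f \<in> Fbar_M \<Longrightarrow> (\<forall>g\<in>Fbar_M. lub Fbar_M (hom_le (\<le>)) {f, g} = pinf \<longrightarrow> g = pinf)
    \<longleftrightarrow> pcomp (Sup (range (snd f))) = bot"
  using lub_pinf_cancel_imp lub_pinf_cancel_if by blast

lemma glb_minf_cancel_iff: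
  assumes f: "f \<in> Fbar_M"
  shows "(\<forall>g\<in>Fbar_M. glb Fbar_M (hom_le (\<le>)) {f, g} = minf \<longrightarrow> g = minf)
    \<longleftrightarrow> pcomp (Sup (range (fst f))) = bot"
proof -
  have "(\<forall>g\<in>Fbar_M. glb Fbar_M (hom_le (\<le>)) {f, g} = minf \<longrightarrow> g = minf)
      \<longleftrightarrow> (\<forall>g\<in>Fbar_M. lub Fbar_M (hom_le (\<le>)) {negate f, negate g} = pinf \<longrightarrow> negate g = pinf)"
    using f by (simp add: glb_Fbar_M) (metis negate_negate negate_pinf)
  also have "\<dots> \<longleftrightarrow> (\<forall>g\<in>Fbar_M. lub Fbar_M (hom_le (\<le>)) {negate f, g} = pinf \<longrightarrow> g = pinf)"
    by (metis negate_in_Fbar_M_iff negate_negate)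
  also have "\<dots> \<longleftrightarrow> pcomp (Sup (range (fst f))) = bot"
    using f by (simp add: lub_pinf_cancel_iff)
  finally show ?thesis .
qed

definition F_M :: "((rat \<Rightarrow> 'b) \<times> (rat \<Rightarrow> 'b)) set" where
  "F_M = {f \<in> Fbar_M. \<forall>g \<in> Fbar_M.
      (lub Fbar_M (hom_le (\<le>)) {f, g} = pinf \<longrightarrow> g = pinf) \<and>
      (glb Fbar_M (hom_le (\<le>)) {f, g} = minf \<longrightarrow> g = minf)}"

lemma F_M_iff:
  "f \<in> F_M \<longleftrightarrow> f \<in> Fbar_M \<and> pcomp (Sup (range (fst f))) = bot \<and> pcomp (Sup (range (snd f))) = bot"
  unfolding F_M_def using lub_pinf_cancel_iff glb_minf_cancel_iff by blast

lemma beta_M_in_C_B_iff: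
  assumes "f \<in> Fbar_M"
  shows "beta_M f \<in> C_B \<longleftrightarrow> f \<in> F_M"
proof -
  have "pcomp (pcomp (Sup (range (fst (beta_M f))))) = top \<longleftrightarrow> pcomp (Sup (range (fst f))) = bot"
    and "pcomp (pcomp (Sup (range (snd (beta_M f))))) = top \<longleftrightarrow> pcomp (Sup (range (snd f))) = bot"
    by (simp_all add: beta_M_def pcomp_SUP_pcomp_pcomp pcomp_eq_bot_iff)
  then show ?thesis
    using assms beta_M_in_Cbar_B_if_Fbar_M unfolding C_B_def F_M_iff by blast
qed

theorem bij_betw_beta_M_F_M: "bij_betw beta_M F_M C_B"
proof (rule bij_betw_subset[OF bij_betw_beta_M])
  show "F_M \<subseteq> Fbar_M" by (simp add: F_M_def)
  show "beta_M ` F_M = C_B"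
  proof
    show "beta_M ` F_M \<subseteq> C_B"
      using beta_M_in_C_B_iff F_M_iff by blast
    show "C_B \<subseteq> beta_M ` F_M"
    proof
      fix f assume f: "f \<in> C_B"
      then have "f \<in> Cbar_B" by (simp add: C_B_def)
      then have "f = beta_M (beta_inv f)" and "beta_inv f \<in> Fbar_M"
        by (simp_all add: beta_M_beta_inv beta_inv_in_Fbar_M)
      with f beta_M_in_C_B_iff show "f \<in> beta_M ` F_M" by (metis image_eqI)
    qed
  qed
qed

end

section \<open>The frame of sublocales\<close>

lemma is_sublocale_Inter: "(\<And>S. S \<in> F \<Longrightarrow> is_sublocale S) \<Longrightarrow> is_sublocale (\<Inter>F)"
  unfolding is_sublocale_def by (simp add: subset_iff)

lemma Inter_in_coS: "F \<subseteq> coS \<Longrightarrow> \<Inter>F \<in> coS"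
  unfolding coS_def using is_sublocale_Inter by blast

typedef (overloaded) ('a::complete_lattice) subloc = "coS :: 'a set set"
  using Inter_in_coS[of "{}"] by blast

lemma Rep_subloc_Abs_subloc_Inter: "F \<subseteq> coS \<Longrightarrow> Rep_subloc (Abs_subloc (\<Inter>F)) = \<Inter>F"
  by (simp add: Abs_subloc_inverse Inter_in_coS)

instantiation subloc :: (complete_lattice) complete_lattice
begin

definition "x \<le> y \<longleftrightarrow> Rep_subloc y \<subseteq> Rep_subloc x"
definition "x < y \<longleftrightarrow> Rep_subloc y \<subset> Rep_subloc x"
definition "Sup X = Abs_subloc (\<Inter> (Rep_subloc ` X))"
definition "Inf X = Abs_subloc (\<Inter> {S \<in> coS. \<Union> (Rep_subloc ` X) \<subseteq> S})"
definition "sup x y = Abs_subloc (Rep_subloc x \<inter> Rep_subloc y)"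
definition "inf x y = Abs_subloc (\<Inter> {S \<in> coS. Rep_subloc x \<union> Rep_subloc y \<subseteq> S})"
definition "bot = Abs_subloc UNIV"
definition "top = Abs_subloc (\<Inter> coS)"

lemma Rep_subloc_Sup: "Rep_subloc (Sup X) = \<Inter> (Rep_subloc ` X)"
  unfolding Sup_subloc_def by (rule Rep_subloc_Abs_subloc_Inter) (use Rep_subloc in blast)

lemma Rep_subloc_Inf: "Rep_subloc (Inf X) = \<Inter> {S \<in> coS. \<Union> (Rep_subloc ` X) \<subseteq> S}"
  unfolding Inf_subloc_def by (rule Rep_subloc_Abs_subloc_Inter) blast

lemma Rep_subloc_sup: "Rep_subloc (sup x y) = Rep_subloc x \<inter> Rep_subloc y"
  unfolding sup_subloc_def using Rep_subloc_Abs_subloc_Inter[of "{Rep_subloc x, Rep_subloc y}"] Rep_subloc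
  by auto

lemma Rep_subloc_inf_least: "Rep_subloc (inf x y) = \<Inter> {S \<in> coS. Rep_subloc x \<union> Rep_subloc y \<subseteq> S}"
  unfolding inf_subloc_def by (rule Rep_subloc_Abs_subloc_Inter) blast

instance
proof
  fix x y z :: "'a subloc" and A :: "'a subloc set"
  show "x < y \<longleftrightarrow> x \<le> y \<and> \<not> y \<le> x"
    unfolding less_eq_subloc_def less_subloc_def by blast
  show "x \<le> x" unfolding less_eq_subloc_def by blast
  show "x \<le> y \<Longrightarrow> y \<le> z \<Longrightarrow> x \<le> z" unfolding less_eq_subloc_def by blast
  show "x \<le> y \<Longrightarrow> y \<le> x \<Longrightarrow> x = y"
    unfolding less_eq_subloc_def using Rep_subloc_inject by blast
  show "inf x y \<le> x" "inf x y \<le> y" "x \<le> y \<Longrightarrow> x \<le> z \<Longrightarrow> x \<le> inf y z"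
    unfolding less_eq_subloc_def Rep_subloc_inf_least using Rep_subloc by blast+
  show "x \<le> sup x y" "y \<le> sup x y" "y \<le> x \<Longrightarrow> z \<le> x \<Longrightarrow> sup y z \<le> x"
    unfolding less_eq_subloc_def Rep_subloc_sup by blast+
  show "x \<in> A \<Longrightarrow> Inf A \<le> x" "(\<And>x. x \<in> A \<Longrightarrow> z \<le> x) \<Longrightarrow> z \<le> Inf A"
    unfolding less_eq_subloc_def Rep_subloc_Inf using Rep_subloc by blast+
  show "x \<in> A \<Longrightarrow> x \<le> Sup A" "(\<And>x. x \<in> A \<Longrightarrow> x \<le> z) \<Longrightarrow> Sup A \<le> z"
    unfolding less_eq_subloc_def Rep_subloc_Sup by blast+
  show "Inf {} = (top :: 'a subloc)" unfolding Inf_subloc_def top_subloc_def by simp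
  show "Sup {} = (bot :: 'a subloc)" unfolding Sup_subloc_def bot_subloc_def by simp
qed

end

lemma is_sublocale_Rep_subloc: "is_sublocale (Rep_subloc x)"
  using Rep_subloc[of x] by (simp add: coS_def)

lemma Inf_in_Rep_subloc: "T \<subseteq> Rep_subloc x \<Longrightarrow> Inf T \<in> Rep_subloc x"
  using is_sublocale_Rep_subloc[of x] by (simp add: is_sublocale_def)

lemma top_in_Rep_subloc: "top \<in> Rep_subloc x"
  using Inf_in_Rep_subloc[of "{}" x] by simp

lemma frame_imp_in_Rep_subloc: "s \<in> Rep_subloc x \<Longrightarrow> frame_imp a s \<in> Rep_subloc x"
  using is_sublocale_Rep_subloc[of x] by (simp add: is_sublocale_def)

context frame
begin

lemma le_frame_imp_iff: "y \<le> frame_imp x s \<longleftrightarrow> inf y x \<le> s" for s :: 'b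
proof
  assume "y \<le> frame_imp x s"
  then have "inf y x \<le> inf x (frame_imp x s)" by (simp add: le_infI1)
  also have "\<dots> = (SUP y\<in>{y. inf y x \<le> s}. inf x y)"
    unfolding frame_imp_def by (rule inf_Sup_distrib)
  also have "\<dots> \<le> s" by (rule SUP_least) (simp add: inf_commute)
  finally show "inf y x \<le> s" .
next
  assume "inf y x \<le> s"
  then show "y \<le> frame_imp x s" unfolding frame_imp_def by (simp add: Sup_upper)
qed

lemma frame_imp_inf: "frame_imp z (inf a b) = inf (frame_imp z a) (frame_imp z b)" for a :: 'b
proof -
  have "w \<le> frame_imp z (inf a b) \<longleftrightarrow> w \<le> inf (frame_imp z a) (frame_imp z b)" for w
    by (simp add: le_frame_imp_iff)
  then show ?thesis by (meson order.antisym order_refl)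
qed

lemma is_sublocale_meets:
  assumes S: "is_sublocale (S :: 'b set)" and T: "is_sublocale T"
  shows "is_sublocale {inf a b | a b. a \<in> S \<and> b \<in> T}"
  unfolding is_sublocale_def
proof (intro conjI allI impI ballI)
  fix W assume W: "W \<subseteq> {inf a b | a b. a \<in> S \<and> b \<in> T}"
  have "\<exists>p. fst p \<in> S \<and> snd p \<in> T \<and> w = inf (fst p) (snd p)" if "w \<in> W" for w
  proof -
    from W that obtain a b where "a \<in> S" "b \<in> T" "w = inf a b" by blast
    then show ?thesis by (intro exI[of _ "(a, b)"]) simp
  qed
  then obtain p where pS: "\<And>w. w \<in> W \<Longrightarrow> fst (p w) \<in> S" and pT: "\<And>w. w \<in> W \<Longrightarrow> snd (p w) \<in> T"
    and p: "\<And>w. w \<in> W \<Longrightarrow> w = inf (fst (p w)) (snd (p w))"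
    by metis
  let ?a = "INF w\<in>W. fst (p w)" and ?b = "INF w\<in>W. snd (p w)"
  have "Inf W = inf ?a ?b"
  proof (rule order.antisym)
    have "Inf W \<le> inf (fst (p w)) (snd (p w))" if "w \<in> W" for w
      using Inf_lower[OF that] p[OF that] by simp
    then show "Inf W \<le> inf ?a ?b" by (simp add: INF_greatest)
    have "inf ?a ?b \<le> inf (fst (p w)) (snd (p w))" if "w \<in> W" for w
      using that by (intro inf_mono INF_lower)
    then show "inf ?a ?b \<le> Inf W" using p by (intro Inf_greatest) metis
  qed
  moreover have "(\<lambda>w. fst (p w)) ` W \<subseteq> S" and "(\<lambda>w. snd (p w)) ` W \<subseteq> T"
    using pS pT by blast+
  then have "?a \<in> S" and "?b \<in> T"
    using S T by (simp_all add: is_sublocale_def)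
  ultimately show "Inf W \<in> {inf a b | a b. a \<in> S \<and> b \<in> T}" by blast
next
  fix x w assume "w \<in> {inf a b | a b. a \<in> S \<and> b \<in> T}"
  then obtain a b where "a \<in> S" "b \<in> T" "w = inf a b" by blast
  moreover have "frame_imp x a \<in> S" and "frame_imp x b \<in> T"
    using S T \<open>a \<in> S\<close> \<open>b \<in> T\<close> by (simp_all add: is_sublocale_def)
  ultimately show "frame_imp x w \<in> {inf a b | a b. a \<in> S \<and> b \<in> T}"
    by (auto simp: frame_imp_inf)
qed

lemma Rep_subloc_inf:
  "Rep_subloc (inf x y) = {inf a b | a b. a \<in> Rep_subloc x \<and> b \<in> Rep_subloc (y :: 'b subloc)}"
proof
  let ?P = "{inf a b | a b. a \<in> Rep_subloc x \<and> b \<in> Rep_subloc y}"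
  have "?P \<in> coS"
    by (simp add: coS_def is_sublocale_meets is_sublocale_Rep_subloc)
  moreover have "Rep_subloc x \<subseteq> ?P"
  proof
    fix a assume "a \<in> Rep_subloc x"
    moreover have "a = inf a top" by simp
    ultimately show "a \<in> ?P" using top_in_Rep_subloc[of y] by blast
  qed
  moreover have "Rep_subloc y \<subseteq> ?P"
  proof
    fix b assume "b \<in> Rep_subloc y"
    moreover have "b = inf top b" by simp
    ultimately show "b \<in> ?P" using top_in_Rep_subloc[of x] by blast
  qed
  ultimately show "Rep_subloc (inf x y) \<subseteq> ?P"
    unfolding Rep_subloc_inf_least by (intro Inter_lower) simp
  show "?P \<subseteq> Rep_subloc (inf x y)"
    unfolding Rep_subloc_inf_least
  proof (intro subsetI InterI)
    fix w S assume w: "w \<in> ?P" and S: "S \<in> {S \<in> coS. Rep_subloc x \<union> Rep_subloc y \<subseteq> S}"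
    from w obtain a b where ab: "a \<in> Rep_subloc x" "b \<in> Rep_subloc y" and w_eq: "w = inf a b"
      by blast
    from S have "is_sublocale S" and "{a, b} \<subseteq> S"
      using ab by (auto simp: coS_def)
    then have "Inf {a, b} \<in> S" unfolding is_sublocale_def by blast
    then show "w \<in> S" by (simp add: w_eq)
  qed
qed

lemma frame_imp_eq_top: "s \<le> a \<Longrightarrow> frame_imp s a = top" for a :: 'b
  by (simp add: top_unique[symmetric] le_frame_imp_iff)

lemma inf_frame_imp: "inf s (frame_imp s z) = inf s z" for z :: 'b
proof (rule order.antisym)
  have "inf (frame_imp s z) s \<le> z"
    using le_frame_imp_iff[of "frame_imp s z" s z] by simp
  then show "inf s (frame_imp s z) \<le> inf s z"
    by (simp add: inf_commute)
  show "inf s z \<le> inf s (frame_imp s z)"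
    by (simp add: le_frame_imp_iff le_infI1)
qed

lemma is_frame_subloc: "is_frame TYPE('b subloc)"
  unfolding is_frame_def
proof (intro allI)
  fix x :: "'b subloc" and Y
  show "inf x (Sup Y) = Sup (inf x ` Y)"
  proof (rule order.antisym)
    show "Sup (inf x ` Y) \<le> inf x (Sup Y)"
      by (rule SUP_least) (auto intro: le_infI2 Sup_upper)
    show "inf x (Sup Y) \<le> Sup (inf x ` Y)"
      unfolding less_eq_subloc_def
    proof
      fix z assume "z \<in> Rep_subloc (Sup (inf x ` Y))"
      then have z: "z \<in> Rep_subloc (inf x y)" if "y \<in> Y" for y
        using that by (simp add: Rep_subloc_Sup)
      define s where "s = Inf {a \<in> Rep_subloc x. z \<le> a}"
      have s: "s \<in> Rep_subloc x"
        unfolding s_def by (rule Inf_in_Rep_subloc) blast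
      have "z \<le> s" unfolding s_def by (rule Inf_greatest) simp
      txt \<open>Below \<open>s\<close>, the least element of \<open>x\<close> above \<open>z\<close>, the element \<open>z = inf a b\<close>
        cannot be told apart from its component \<open>b \<in> y\<close>.\<close>
      have "frame_imp s z \<in> Rep_subloc y" if y: "y \<in> Y" for y
      proof -
        obtain a b where "a \<in> Rep_subloc x" "b \<in> Rep_subloc y" and z_eq: "z = inf a b"
          using z[OF y] unfolding Rep_subloc_inf by blast
        then have "s \<le> a" unfolding s_def by (intro Inf_lower) simp
        then have "frame_imp s z = frame_imp s b"
          by (simp add: z_eq frame_imp_inf frame_imp_eq_top)
        with \<open>b \<in> Rep_subloc y\<close> show ?thesis
          by (simp add: frame_imp_in_Rep_subloc)
      qed
      then have "frame_imp s z \<in> Rep_subloc (Sup Y)"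
        by (simp add: Rep_subloc_Sup)
      moreover have "z = inf s (frame_imp s z)"
        using \<open>z \<le> s\<close> by (simp add: inf_frame_imp inf_absorb2)
      ultimately show "z \<in> Rep_subloc (inf x (Sup Y))"
        unfolding Rep_subloc_inf using s by blast
    qed
  qed
qed

end

section \<open>Transfer to \<open>coS(L)\<close>\<close>

lemma coS_le_Rep_subloc_iff [simp]: "coS_le (Rep_subloc x) (Rep_subloc y) \<longleftrightarrow> x \<le> y"
  by (simp add: coS_le_def less_eq_subloc_def)

lemma coS_le_antisym: "coS_le S T \<Longrightarrow> coS_le T S \<Longrightarrow> S = T"
  by (simp add: coS_le_def)

lemma hom_le_coS_antisym: "hom_le coS_le f g \<Longrightarrow> hom_le coS_le g f \<Longrightarrow> f = g"
  unfolding hom_le_def coS_le_def by (intro prod_eqI ext subset_antisym) auto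

lemma range_Rep_subloc: "range Rep_subloc = coS"
  by (rule type_definition.Rep_range[OF type_definition_subloc])

lemma Collect_coS: "{S \<in> coS. P S} = Rep_subloc ` {x. P (Rep_subloc x)}"
  by (auto simp: range_Rep_subloc[symmetric])

lemma lub_coS: "lub coS coS_le (Rep_subloc ` X) = Rep_subloc (Sup X)"
proof -
  have "lub (range Rep_subloc) coS_le (Rep_subloc ` X) = Rep_subloc (Sup X)"
    by (rule lub_image_eq[where le = "(\<le>)"])
       (auto simp: is_lub_def intro: coS_le_antisym Sup_upper Sup_least)
  then show ?thesis by (simp add: range_Rep_subloc)
qed

lemma glb_coS: "glb coS coS_le (Rep_subloc ` X) = Rep_subloc (Inf X)"
proof -
  have "glb (range Rep_subloc) coS_le (Rep_subloc ` X) = Rep_subloc (Inf X)"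
    by (rule glb_image_eq[where le = "(\<le>)"])
       (auto simp: is_glb_def intro: coS_le_antisym Inf_lower Inf_greatest)
  then show ?thesis by (simp add: range_Rep_subloc)
qed

lemma meet_coS: "meet coS coS_le (Rep_subloc x) (Rep_subloc y) = Rep_subloc (inf x y)"
  using glb_coS[of "{x, y}"] by (simp add: meet_def)

lemma bot_el_coS: "bot_el coS coS_le = Rep_subloc bot"
  using lub_coS[of "{}"] by (simp add: bot_el_def)

lemma top_el_coS: "top_el coS coS_le = Rep_subloc top"
  using glb_coS[of "{}"] by (simp add: top_el_def)

lemma lub_coS_image: "lub coS coS_le ((\<lambda>x. Rep_subloc (g x)) ` A) = Rep_subloc (SUP x\<in>A. g x)"
  using lub_coS[of "g ` A"] by (simp add: image_image)

lemma setcompr_greaterThan: "{g s | s. s > r} = g ` {r<..}"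
  and setcompr_lessThan: "{g r | r. r < s} = g ` {..<s}"
  by auto

definition Rep_pair ::
    "(rat \<Rightarrow> 'a::complete_lattice subloc) \<times> (rat \<Rightarrow> 'a subloc) \<Rightarrow> (rat \<Rightarrow> 'a set) \<times> (rat \<Rightarrow> 'a set)"
  where
  "Rep_pair f = (\<lambda>r. Rep_subloc (fst f r), \<lambda>s. Rep_subloc (snd f s))"

lemma hom_le_Rep_pair_iff [simp]: "hom_le coS_le (Rep_pair f) (Rep_pair g) \<longleftrightarrow> hom_le (\<le>) f g"
  by (simp add: hom_le_def Rep_pair_def)

lemma Rep_pair_inject [simp]: "Rep_pair f = Rep_pair g \<longleftrightarrow> f = g"
  by (auto simp: Rep_pair_def prod_eq_iff fun_eq_iff Rep_subloc_inject)

lemma Rep_pair_cases: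
  assumes "\<And>r. fst f r \<in> Rep_subloc ` A" and "\<And>s. snd f s \<in> Rep_subloc ` A"
  obtains g where "f = Rep_pair g" and "\<And>r. fst g r \<in> A" and "\<And>s. snd g s \<in> A"
proof
  let ?g = "(\<lambda>r. Abs_subloc (fst f r), \<lambda>s. Abs_subloc (snd f s))"
  have "fst f r \<in> coS" and "snd f s \<in> coS" for r s
    using assms(1)[of r] assms(2)[of s] Rep_subloc by auto
  then show "f = Rep_pair ?g"
    by (simp add: Rep_pair_def prod_eq_iff fun_eq_iff Abs_subloc_inverse)
  show "fst ?g r \<in> A" and "snd ?g s \<in> A" for r s
    using assms(1)[of r] assms(2)[of s] by (auto simp: Rep_subloc_inverse)
qed

context frame
begin

interpretation S: frame "TYPE('b subloc)"
  by (rule frame.intro) (rule is_frame_subloc)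

lemma pcompl_coS: "pcompl coS coS_le (Rep_subloc x) = Rep_subloc (S.pcomp x)"
  by (simp add: pcompl_def Collect_coS meet_coS bot_el_coS Rep_subloc_inject lub_coS S.pcomp_def)

lemma beta_Rep_subloc: "beta (Rep_subloc x) = Rep_subloc (S.pcomp (S.pcomp x))"
  by (simp add: beta_def pcompl_coS)

lemma booleanization_coS: "booleanization coS coS_le = Rep_subloc ` S.regular"
  by (simp add: booleanization_def Collect_coS pcompl_coS Rep_subloc_inject S.regular_def)

lemma lub_booleanization:
  assumes "X \<subseteq> S.regular"
  shows "lub (Rep_subloc ` S.regular) coS_le (Rep_subloc ` X) = Rep_subloc (S.pcomp (S.pcomp (Sup X)))"
  by (rule lub_image_eq[where le = "(\<le>)"]) (use assms in \<open>auto intro: coS_le_antisym S.is_lub_regular\<close>)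

lemma glb_booleanization:
  assumes "X \<subseteq> S.regular"
  shows "glb (Rep_subloc ` S.regular) coS_le (Rep_subloc ` X) = Rep_subloc (Inf X)"
  by (rule glb_image_eq[where le = "(\<le>)"]) (use assms in \<open>auto intro: coS_le_antisym S.is_glb_regular\<close>)

lemma lub_booleanization_image:
  "g ` A \<subseteq> S.regular \<Longrightarrow> lub (Rep_subloc ` S.regular) coS_le ((\<lambda>x. Rep_subloc (g x)) ` A)
    = Rep_subloc (S.pcomp (S.pcomp (SUP x\<in>A. g x)))"
  using lub_booleanization[of "g ` A"] by (simp add: image_image)

lemma meet_join_booleanization:
  assumes "a \<in> S.regular" and "b \<in> S.regular"
  shows "meet (Rep_subloc ` S.regular) coS_le (Rep_subloc a) (Rep_subloc b) = Rep_subloc (inf a b)"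
    and "join (Rep_subloc ` S.regular) coS_le (Rep_subloc a) (Rep_subloc b)
      = Rep_subloc (S.pcomp (S.pcomp (sup a b)))"
  using glb_booleanization[of "{a, b}"] lub_booleanization[of "{a, b}"] assms
  by (simp_all add: meet_def join_def)

lemma bot_el_booleanization: "bot_el (Rep_subloc ` S.regular) coS_le = Rep_subloc bot"
  and top_el_booleanization: "top_el (Rep_subloc ` S.regular) coS_le = Rep_subloc top"
  using lub_booleanization[of "{}"] glb_booleanization[of "{}"]
  by (simp_all add: bot_el_def top_el_def)

lemma LIR_hom_coS_iff: "LIR_hom coS coS_le (Rep_pair f) \<longleftrightarrow> S.is_LIR_hom f"
  unfolding LIR_hom_def S.is_LIR_hom_def Rep_pair_def fst_conv snd_conv
  by (simp add: Rep_subloc meet_coS bot_el_coS setcompr_greaterThan setcompr_lessThan lub_coS_image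
      Rep_subloc_inject)

lemma Rep_pair_in_Fbar_iff: "Rep_pair f \<in> Fbar \<longleftrightarrow> f \<in> S.Fbar_M"
  unfolding Fbar_def S.Fbar_M_def mem_Collect_eq LIR_hom_coS_iff
  by (simp add: Rep_pair_def pcompl_coS)

lemma Fbar_eq: "Fbar = Rep_pair ` S.Fbar_M"
proof (intro set_eqI iffI)
  fix f :: "(rat \<Rightarrow> 'b set) \<times> (rat \<Rightarrow> 'b set)" assume f: "f \<in> Fbar"
  then have "fst f r \<in> Rep_subloc ` UNIV" and "snd f s \<in> Rep_subloc ` UNIV" for r s
    unfolding Fbar_def LIR_hom_def range_Rep_subloc by blast+
  then obtain g where "f = Rep_pair g"
    by (rule Rep_pair_cases)
  with f show "f \<in> Rep_pair ` S.Fbar_M"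
    by (auto simp: Rep_pair_in_Fbar_iff)
qed (auto simp: Rep_pair_in_Fbar_iff)

lemma PInf_eq: "PInf = Rep_pair pinf"
  and MInf_eq: "MInf = Rep_pair minf"
  by (simp_all add: PInf_def MInf_def pinf_def minf_def Rep_pair_def top_el_coS bot_el_coS)

lemma lub_Fbar:
  assumes "f \<in> S.Fbar_M" and "g \<in> S.Fbar_M"
  shows "lub Fbar (hom_le coS_le) {Rep_pair f, Rep_pair g} = Rep_pair (lub S.Fbar_M (hom_le (\<le>)) {f, g})"
proof -
  have "lub (Rep_pair ` S.Fbar_M) (hom_le coS_le) (Rep_pair ` {f, g})
      = Rep_pair (lub S.Fbar_M (hom_le (\<le>)) {f, g})"
    by (rule lub_image_eq[where le = "hom_le (\<le>)", OF _ hom_le_coS_antisym])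
       (use assms in \<open>auto simp: S.lub_Fbar_M S.is_lub_Fbar_M\<close>)
  then show ?thesis by (simp add: Fbar_eq)
qed

lemma glb_Fbar:
  assumes "f \<in> S.Fbar_M" and "g \<in> S.Fbar_M"
  shows "glb Fbar (hom_le coS_le) {Rep_pair f, Rep_pair g} = Rep_pair (glb S.Fbar_M (hom_le (\<le>)) {f, g})"
proof -
  have "glb (Rep_pair ` S.Fbar_M) (hom_le coS_le) (Rep_pair ` {f, g})
      = Rep_pair (glb S.Fbar_M (hom_le (\<le>)) {f, g})"
    by (rule glb_image_eq[where le = "hom_le (\<le>)", OF _ hom_le_coS_antisym])
       (use assms in \<open>auto simp: S.glb_Fbar_M S.is_glb_Fbar_M\<close>)
  then show ?thesis by (simp add: Fbar_eq)
qed

lemma FL_eq: "FL = Rep_pair ` S.F_M"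
proof -
  have Ball_Fbar: "(\<forall>g\<in>Fbar. P g) \<longleftrightarrow> (\<forall>g\<in>S.Fbar_M. P (Rep_pair g))" for P
    by (simp add: Fbar_eq)
  have "Rep_pair f \<in> FL \<longleftrightarrow> f \<in> S.F_M" if "f \<in> S.Fbar_M" for f
    using that unfolding FL_def S.F_M_def
    by (simp add: Rep_pair_in_Fbar_iff Ball_Fbar lub_Fbar glb_Fbar PInf_eq MInf_eq)
  moreover have "FL \<subseteq> Rep_pair ` S.Fbar_M" and "S.F_M \<subseteq> S.Fbar_M"
    by (auto simp: FL_def S.F_M_def Fbar_eq)
  ultimately show ?thesis by (auto 0 3)
qed

lemma Rep_pair_in_C_frame_iff:
  assumes "\<And>r. fst f r \<in> S.regular" and "\<And>s. snd f s \<in> S.regular"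
  shows "Rep_pair f \<in> C_frame (booleanization coS coS_le) coS_le \<longleftrightarrow> f \<in> S.C_B"
  unfolding C_frame_def S.C_B_def S.Cbar_B_def LIR_hom_def booleanization_coS Rep_pair_def
    mem_Collect_eq fst_conv snd_conv
  using assms
  by (simp add: meet_join_booleanization bot_el_booleanization top_el_booleanization
      setcompr_greaterThan setcompr_lessThan lub_booleanization_image image_subset_iff
      Rep_subloc_inject inj_image_mem_iff inj_def)

lemma C_frame_eq: "C_frame (booleanization coS coS_le) coS_le = Rep_pair ` S.C_B"
proof (intro set_eqI iffI)
  fix f :: "(rat \<Rightarrow> 'b set) \<times> (rat \<Rightarrow> 'b set)"
  assume f: "f \<in> C_frame (booleanization coS coS_le) coS_le"
  then have "fst f r \<in> Rep_subloc ` S.regular" and "snd f s \<in> Rep_subloc ` S.regular" for r s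
    unfolding C_frame_def LIR_hom_def booleanization_coS by blast+
  then obtain g where "f = Rep_pair g" and "\<And>r. fst g r \<in> S.regular" and "\<And>s. snd g s \<in> S.regular"
    by (rule Rep_pair_cases) blast
  with f show "f \<in> Rep_pair ` S.C_B"
    by (auto simp: Rep_pair_in_C_frame_iff)
next
  fix f :: "(rat \<Rightarrow> 'b set) \<times> (rat \<Rightarrow> 'b set)" assume "f \<in> Rep_pair ` S.C_B"
  then obtain g where "f = Rep_pair g" and "g \<in> S.C_B" by blast
  moreover have "fst g r \<in> S.regular" and "snd g s \<in> S.regular" for r s
    using \<open>g \<in> S.C_B\<close> unfolding S.C_B_def S.Cbar_B_def by blast+
  ultimately show "f \<in> C_frame (booleanization coS coS_le) coS_le"
    by (simp add: Rep_pair_in_C_frame_iff)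
qed

lemma beta_comp_Rep_pair: "beta_comp (Rep_pair f) = Rep_pair (S.beta_M f)"
  by (simp add: beta_comp_def Rep_pair_def S.beta_M_def beta_Rep_subloc)

end

theorem mainTheorem15:
  assumes "is_frame TYPE('a::complete_lattice)"
  shows "bij_betw beta_comp (FL :: ((rat \<Rightarrow> 'a set) \<times> (rat \<Rightarrow> 'a set)) set)
           (C_frame (booleanization coS coS_le) coS_le)
       \<and> (\<forall>f \<in> (FL :: ((rat \<Rightarrow> 'a set) \<times> (rat \<Rightarrow> 'a set)) set). \<forall>g \<in> FL.
            hom_le coS_le f g \<longleftrightarrow> hom_le coS_le (beta_comp f) (beta_comp g))"
proof -
  interpret frame "TYPE('a)" by (rule frame.intro) (rule assms)
  interpret S: frame "TYPE('a subloc)" by (rule frame.intro) (rule is_frame_subloc)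
  have "bij_betw (Rep_pair \<circ> S.beta_M) S.F_M (Rep_pair ` S.C_B)"
    by (rule bij_betw_trans[OF S.bij_betw_beta_M_F_M]) (simp add: bij_betw_def inj_on_def)
  moreover have "beta_comp \<circ> Rep_pair = Rep_pair \<circ> S.beta_M"
    by (simp add: fun_eq_iff beta_comp_Rep_pair)
  moreover have "bij_betw Rep_pair S.F_M (Rep_pair ` S.F_M)"
    by (simp add: bij_betw_def inj_on_def)
  ultimately have "bij_betw beta_comp (Rep_pair ` S.F_M) (Rep_pair ` S.C_B)"
    using bij_betw_comp_iff by metis
  moreover have "hom_le coS_le (Rep_pair f) (Rep_pair g)
      \<longleftrightarrow> hom_le coS_le (beta_comp (Rep_pair f)) (beta_comp (Rep_pair g))"
    if "f \<in> S.F_M" and "g \<in> S.F_M" for f g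
    using that by (simp add: beta_comp_Rep_pair S.hom_le_beta_M_iff S.F_M_def)
  ultimately show ?thesis
    by (simp add: FL_eq C_frame_eq)
qed

end
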